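(* The set of all values $|\Lambda_h:\Gamma|$ for $\Gamma\in\mathrm{WR}(\Lambda_h)$ equals the set of integers $3^u j^2 d(2m-n)n$, where $u\in\{0,1\}$, $j,d,m,n\in\mathbb{Z}_{>0}$, $d$ is $1$ or a product of distinct primes congruent to $1$ modulo $3$, $\gcd(m,n)=1$, $3\nmid(m+n)$, and $1\le m/n\le 2$.
   Context: $\Lambda_h = \begin{bmatrix} 1 & -1/2 \\ 0 & \sqrt3/2\end{bmatrix}\mathbb{Z}^2$. For a full-rank sublattice $\Gamma\subseteq\Lambda_h$, $|\Lambda_h:\Gamma|=\det\Gamma/\det\Lambda_h$. A full-rank lattice is well-rounded (WR) if it has a basis consisting of vectors of minimal nonzero Euclidean norm; $\mathrm{WR}(\Lambda_h)$ is the set of full-rank WR sublattices of $\Lambda_h$. *)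

theory Defs
  imports "HOL-Analysis.Analysis" "HOL-Computational_Algebra.Computational_Algebra"
begin

text \<open>Vectors of the plane R^2 are represented as pairs (real * real); the product norm
is the Euclidean norm.\<close>

definition lat_span :: "real \<times> real \<Rightarrow> real \<times> real \<Rightarrow> (real \<times> real) set" where
  "lat_span v w = {x. \<exists>a b :: int. x = of_int a *\<^sub>R v + of_int b *\<^sub>R w}"

definition det2 :: "real \<times> real \<Rightarrow> real \<times> real \<Rightarrow> real" where
  "det2 v w = fst v * snd w - snd v * fst w"

definition hex_lattice :: "(real \<times> real) set" where
  "hex_lattice = lat_span (1, 0) (-1/2, sqrt 3 / 2)"

definition is_lat_basis :: "(real \<times> real) set \<Rightarrow> real \<times> real \<Rightarrow> real \<times> real \<Rightarrow> bool" where
  "is_lat_basis L v w \<longleftrightarrow> det2 v w \<noteq> 0 \<and> L = lat_span v w"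

definition full_rank_sublattice_hex :: "(real \<times> real) set \<Rightarrow> bool" where
  "full_rank_sublattice_hex L \<longleftrightarrow> L \<subseteq> hex_lattice \<and> (\<exists>v w. is_lat_basis L v w)"

definition lat_det :: "(real \<times> real) set \<Rightarrow> real" where
  "lat_det L = (THE d. \<exists>v w. is_lat_basis L v w \<and> d = \<bar>det2 v w\<bar>)"

definition hex_index :: "(real \<times> real) set \<Rightarrow> real" where
  "hex_index L = lat_det L / lat_det hex_lattice"

definition well_rounded :: "(real \<times> real) set \<Rightarrow> bool" where
  "well_rounded L \<longleftrightarrow> (\<exists>v w. is_lat_basis L v w \<and>
      (\<forall>x\<in>L. x \<noteq> 0 \<longrightarrow> norm v \<le> norm x) \<and>
      (\<forall>x\<in>L. x \<noteq> 0 \<longrightarrow> norm w \<le> norm x))"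

definition WR_hex :: "(real \<times> real) set set" where
  "WR_hex = {L. full_rank_sublattice_hex L \<and> well_rounded L}"

end

theory Submission
  imports Defs "HOL-Number_Theory.Number_Theory"
begin

text \<open>
  Identify the hexagonal lattice with the Eisenstein integers \<open>\<int>[\<omega>]\<close>, where
  \<open>|a + b\<omega>|\<^sup>2 = a\<^sup>2 - ab + b\<^sup>2\<close>. A sublattice is well-rounded exactly when it has a basis
  \<open>v, w\<close> with \<open>|v| = |w| \<le> |v \<plusminus> w|\<close>. Then \<open>s = v + w\<close> and \<open>t = v - w\<close> are orthogonal and
  their squared lengths are within a factor 3 of each other. Writing \<open>s = k p\<close> with \<open>p\<close> primitive,
  orthogonality forces \<open>g t = l p (1 + 2\<omega>)\<close> with \<open>g \<in> {1, 3}\<close>, and the index is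
  \<open>|det(v, w)| = k |l| N(p) / g\<close>. Here \<open>N(p) / g\<close> is prime to 3 and, dividing a primitive norm,
  is a product of primes \<open>\<equiv> 1 (mod 3)\<close>; moreover \<open>k \<equiv> l (mod 2)\<close> and \<open>k, |l|\<close> are within a
  factor 3 of each other. Splitting off \<open>gcd(k, l)\<close> and a possible factor 3 brings \<open>k |l| N(p) / g\<close>
  into the form \<open>3\<^sup>u j\<^sup>2 d (2m - n) n\<close>. Conversely every product of primes \<open>\<equiv> 1 (mod 3)\<close> is a
  norm \<open>N(\<delta>)\<close> (Thue's lemma and multiplicativity), and \<open>v = (h + l + l\<omega>) \<delta>\<close>, \<open>w = (h - l\<omega>) \<delta>\<close>
  span a well-rounded lattice of index \<open>k l N(\<delta>)\<close> whenever \<open>k = l + 2h\<close> and \<open>l \<le> k \<le> 3l\<close>.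
\<close>

text \<open>The norm of the Eisenstein integer \<open>a + b\<omega>\<close>, \<open>\<omega> = exp(2\<pi>i/3)\<close>.\<close>

definition eis_norm :: "int \<Rightarrow> int \<Rightarrow> int" where
  "eis_norm a b = a\<^sup>2 - a * b + b\<^sup>2"

lemma eis_norm_mult: "eis_norm a b * eis_norm c d = eis_norm (a * c - b * d) (a * d + b * c - b * d)"
  unfolding eis_norm_def by (simp add: algebra_simps power2_eq_square)

lemma eis_norm_scale: "eis_norm (c * a) (c * b) = c\<^sup>2 * eis_norm a b"
  unfolding eis_norm_def by (simp add: algebra_simps power2_eq_square)

lemma eis_norm_pos:
  assumes "a \<noteq> 0 \<or> b \<noteq> 0"
  shows "0 < eis_norm a b"
proof -
  have "4 * eis_norm a b = (2 * a - b)\<^sup>2 + 3 * b\<^sup>2"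
    unfolding eis_norm_def by (simp add: algebra_simps power2_eq_square)
  moreover have "0 < (2 * a - b)\<^sup>2 + 3 * b\<^sup>2"
    using assms by (cases "b = 0") (auto simp: add_nonneg_pos)
  ultimately show ?thesis by linarith
qed

lemma four_dvd_eis_norm_if_even:
  assumes "even (eis_norm a b)"
  shows "4 dvd eis_norm a b"
proof -
  have "even a \<and> even b"
    using assms unfolding eis_norm_def by (auto simp: even_add even_mult_iff)
  then show ?thesis
    unfolding eis_norm_def by (auto elim!: evenE simp: power2_eq_square algebra_simps)
qed

lemma eis_norm_le_three_sq:
  assumes "\<bar>a\<bar> \<le> s" "\<bar>b\<bar> \<le> s"
  shows "eis_norm a b \<le> 3 * s\<^sup>2"
proof -
  have "a\<^sup>2 \<le> s\<^sup>2" "b\<^sup>2 \<le> s\<^sup>2"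
    using assms abs_le_square_iff[of a s] abs_le_square_iff[of b s] by auto
  moreover have "0 \<le> s"
    using assms(1) by linarith
  then have "- (a * b) \<le> s * s"
    using abs_ge_minus_self[of "a * b"] mult_mono[OF assms] by (simp add: abs_mult)
  ultimately show ?thesis
    unfolding eis_norm_def by (simp add: power2_eq_square)
qed

lemma three_dvd_eis_norm_iff: "3 dvd eis_norm a b \<longleftrightarrow> 3 dvd a + b"
proof -
  have "(a + b)\<^sup>2 = eis_norm a b + 3 * (a * b)"
    unfolding eis_norm_def by (simp add: algebra_simps power2_eq_square)
  then have "3 dvd eis_norm a b \<longleftrightarrow> 3 dvd (a + b)\<^sup>2"
    using dvd_add_left_iff[of 3 "3 * (a * b)" "eis_norm a b"] by simp
  also have "\<dots> \<longleftrightarrow> 3 dvd a + b"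
    by (rule prime_dvd_power_iff) simp_all
  finally show ?thesis .
qed

lemma not_nine_dvd_eis_norm:
  assumes "coprime a b"
  shows "\<not> 9 dvd eis_norm a b"
proof
  assume nine: "9 dvd eis_norm a b"
  then have "3 dvd a + b"
    using three_dvd_eis_norm_iff dvd_trans[of 3 9 "eis_norm a b"] by simp
  then have "9 dvd (a + b)\<^sup>2"
    by (auto simp: power2_eq_square)
  moreover have "(a + b)\<^sup>2 = eis_norm a b + 3 * (a * b)"
    unfolding eis_norm_def by (simp add: algebra_simps power2_eq_square)
  ultimately have "9 dvd 3 * (a * b)"
    using nine dvd_diff[of 9 "(a + b)\<^sup>2" "eis_norm a b"] by simp
  then obtain c where "3 * (a * b) = 9 * c"
    by (elim dvdE)
  then have "3 dvd a * b"
    by presburger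
  then have "3 dvd a \<or> 3 dvd b"
    by (simp add: prime_dvd_mult_iff)
  with \<open>3 dvd a + b\<close> have "3 dvd a \<and> 3 dvd b"
    by (metis add_diff_cancel_left' add_diff_cancel_right' dvd_diff)
  then have "is_unit (3::int)"
    using coprime_common_divisor[OF assms] by blast
  then show False
    by simp
qed

lemma fermat_theorem_int:
  fixes p a :: int
  assumes "prime p" "\<not> p dvd a"
  shows "[a ^ (nat p - 1) = 1] (mod p)"
proof -
  obtain p' where p': "p = int p'"
    using prime_ge_0_int[OF assms(1)] nonneg_int_cases by blast
  have "prime p'"
    using assms(1) p' by simp
  define a' where "a' = nat (a mod p)"
  have a': "int a' = a mod p"
    unfolding a'_def using p' prime_gt_0_nat[OF \<open>prime p'\<close>] by simp
  have "\<not> p' dvd a'"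
  proof
    assume "p' dvd a'"
    then have "p dvd a mod p"
      using p' a' by (metis of_nat_dvd_iff)
    with assms(2) show False
      by (simp add: dvd_mod_iff)
  qed
  then have "[a' ^ (p' - 1) = 1] (mod p')"
    using fermat_theorem \<open>prime p'\<close> by blast
  then have "[int a' ^ (p' - 1) = 1] (mod int p')"
    by (metis cong_int_iff of_nat_1 of_nat_power)
  then have "[(a mod p) ^ (nat p - 1) = 1] (mod p)"
    using a' p' by simp
  then show ?thesis
    by (metis cong_def power_mod)
qed

lemma prime_dvd_cube_diff_imp_dvd_diff:
  fixes r x y :: int
  assumes r: "prime r" "r mod 3 = 2" and dvd: "r dvd x ^ 3 - y ^ 3"
  shows "r dvd x - y"
proof -
  have "r dvd x ^ 3 \<longleftrightarrow> r dvd y ^ 3"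
    using dvd_add_right_iff[OF dvd, of "y ^ 3"] by simp
  then have same: "r dvd x \<longleftrightarrow> r dvd y"
    using r(1) by (simp add: prime_dvd_power_iff)
  show ?thesis
  proof (cases "r dvd x")
    case True
    with same show ?thesis
      by simp
  next
    case False
    with same have "\<not> r dvd y"
      by simp
    \<comment> \<open>with \<open>r - 1 = 3q + 1\<close>, Fermat gives \<open>x^(3q) x \<equiv> 1 \<equiv> y^(3q) y\<close> while \<open>x^(3q) \<equiv> y^(3q)\<close>\<close>
    define t where "t = r div 3"
    have t: "r = 3 * t + 2" "0 \<le> t"
      unfolding t_def using r(2) prime_gt_1_int[OF r(1)] by presburger+
    define q where "q = nat t"
    have q: "nat r - 1 = 3 * q + 1"
      unfolding q_def using t by (simp add: nat_add_distrib nat_mult_distrib)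
    have "[x ^ 3 = y ^ 3] (mod r)"
      using dvd by (simp add: cong_iff_dvd_diff)
    then have "[x ^ (3 * q) * y = y ^ (3 * q) * y] (mod r)"
      by (intro cong_mult cong_refl) (simp add: power_mult cong_pow)
    also have "[y ^ (3 * q) * y = 1] (mod r)"
      using fermat_theorem_int[OF r(1) \<open>\<not> r dvd y\<close>] q by (simp add: mult.commute)
    also have "[1 = x ^ (3 * q) * x] (mod r)"
      using fermat_theorem_int[OF r(1) False] q by (simp add: mult.commute cong_sym_eq)
    finally have "[y = x] (mod r)"
      using cong_mult_lcancel[of "x ^ (3 * q)" r] False r(1)
      by (simp add: prime_imp_coprime coprime_commute)
    then show ?thesis
      by (simp add: cong_iff_dvd_diff dvd_diff_commute)
  qed
qed

lemma prime_dvd_eis_norm_mod_3: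
  fixes r a b :: int
  assumes "coprime a b" "prime r" "r dvd eis_norm a b"
  shows "r = 3 \<or> r mod 3 = 1"
proof (rule ccontr)
  assume contra: "\<not> (r = 3 \<or> r mod 3 = 1)"
  have "\<not> r dvd 3" "\<not> 3 dvd r"
    using contra assms(2) primes_dvd_imp_eq[of r 3] primes_dvd_imp_eq[of 3 r] by auto
  have "r mod 3 = 2"
    using \<open>\<not> 3 dvd r\<close> contra by presburger
  have "a ^ 3 - (- b) ^ 3 = (a + b) * eis_norm a b"
    unfolding eis_norm_def by (simp add: algebra_simps power2_eq_square power3_eq_cube)
  then have "r dvd a + b"
    using prime_dvd_cube_diff_imp_dvd_diff[OF assms(2) \<open>r mod 3 = 2\<close>, of a "- b"] assms(3) by simp
  moreover have "3 * (a * b) = (a + b)\<^sup>2 - eis_norm a b"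
    unfolding eis_norm_def by (simp add: algebra_simps power2_eq_square)
  ultimately have "r dvd 3 * (a * b)"
    using assms(3) by (simp add: power2_eq_square)
  then have "r dvd a \<or> r dvd b"
    using \<open>\<not> r dvd 3\<close> assms(2) by (simp add: prime_dvd_mult_iff)
  with \<open>r dvd a + b\<close> have "r dvd a \<and> r dvd b"
    by (metis add_diff_cancel_left' add_diff_cancel_right' dvd_diff)
  then have "is_unit r"
    using coprime_common_divisor[OF assms(1)] by blast
  with assms(2) show False
    using not_prime_unit by blast
qed

lemma exists_cube_root_of_unity_mod_prime:
  fixes p :: int
  assumes "prime p" "p mod 3 = 1"
  shows "\<exists>x. p dvd x\<^sup>2 + x + 1"
proof -
  obtain p' where p': "p = int p'"
    using prime_ge_0_int[OF assms(1)] nonneg_int_cases by blast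
  have "prime p'"
    using assms(1) p' by simp
  have "3 dvd p' - 1"
    using assms(2) p' prime_gt_1_nat[OF \<open>prime p'\<close>] by (simp add: dvd_def) presburger
  then have "card {x \<in> totatives p'. ord p' x = 3} = totient 3"
    using prime_card_elements_with_ord_eq_totient[of p' 3] \<open>prime p'\<close> prime_gt_1_nat by simp
  also have "\<dots> = 2"
    using totient_prime[of 3] by simp
  finally have "{x \<in> totatives p'. ord p' x = 3} \<noteq> {}"
    by (metis card.empty zero_neq_numeral)
  then obtain x where x: "ord p' x = 3"
    by auto
  have "[x ^ 3 = 1] (mod p')"
    using ord_divides[of x 3 p'] x by simp
  then have "p dvd int x ^ 3 - 1"
    using p'(1) by (metis cong_int_iff cong_iff_dvd_diff of_nat_1 of_nat_power)
  moreover have "\<not> [x = 1] (mod p')"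
    using ord_eq_Suc_0_iff[of p' x] x by simp
  then have "\<not> p dvd int x - 1"
    using p'(1) by (metis cong_int_iff cong_iff_dvd_diff of_nat_1)
  moreover have "int x ^ 3 - 1 = (int x - 1) * (int x ^ 2 + int x + 1)"
    by (simp add: algebra_simps power2_eq_square power3_eq_cube)
  ultimately have "p dvd int x ^ 2 + int x + 1"
    using assms(1) prime_dvd_mult_iff by auto
  then show ?thesis
    by blast
qed

lemma exists_nat_sqrt:
  fixes n :: nat
  obtains s where "s\<^sup>2 \<le> n" "n < (s + 1)\<^sup>2"
proof (induction n arbitrary: thesis)
  case 0
  then show ?case
    by simp
next
  case (Suc n)
  obtain s where s: "s\<^sup>2 \<le> n" "n < (s + 1)\<^sup>2"
    by (rule Suc.IH)
  show ?case
  proof (cases "Suc n < (s + 1)\<^sup>2")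
    case True
    with s(1) show ?thesis
      by (intro Suc.prems[of s]) simp_all
  next
    case False
    with s(2) have "Suc n = (s + 1)\<^sup>2"
      by simp
    then show ?thesis
      by (intro Suc.prems[of "s + 1"]) (simp_all add: power2_eq_square)
  qed
qed

lemma thue_lemma:
  fixes p x :: int and s :: nat
  assumes "0 < p" "nat p < (s + 1)\<^sup>2"
  obtains a b where "a \<noteq> 0 \<or> b \<noteq> 0" "\<bar>a\<bar> \<le> int s" "\<bar>b\<bar> \<le> int s" "p dvd a + x * b"
proof -
  define A where "A = {0..s} \<times> {0..s}"
  define f where "f = (\<lambda>(u, v). (int u + x * int v) mod p)"
  have "card (f ` A) \<le> card {0..<p}"
    by (rule card_mono) (use assms(1) in \<open>auto simp: f_def\<close>)
  also have "\<dots> < card A"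
    using assms(2) unfolding A_def by (simp add: power2_eq_square)
  finally obtain u v u' v' where uv: "(u, v) \<in> A" "(u', v') \<in> A" "(u, v) \<noteq> (u', v')" "f (u, v) = f (u', v')"
    using pigeonhole unfolding inj_on_def by (metis prod.collapse)
  show thesis
  proof
    show "int u - int u' \<noteq> 0 \<or> int v - int v' \<noteq> 0"
      using uv(3) by auto
    show "\<bar>int u - int u'\<bar> \<le> int s" "\<bar>int v - int v'\<bar> \<le> int s"
      using uv(1,2) unfolding A_def by auto
    have "p dvd (int u + x * int v) - (int u' + x * int v')"
      using uv(4) unfolding f_def by (simp add: mod_eq_dvd_iff)
    then show "p dvd int u - int u' + x * (int v - int v')"
      by (simp add: algebra_simps)
  qed
qed

lemma eis_norm_eq_prime:
  fixes p x :: int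
  assumes p: "prime p" and dvd: "p dvd x\<^sup>2 + x + 1"
  shows "\<exists>a b. eis_norm a b = p"
proof -
  have "0 < p"
    using p prime_gt_0_int by blast
  obtain s where s: "s\<^sup>2 \<le> nat p" "nat p < (s + 1)\<^sup>2"
    by (rule exists_nat_sqrt)
  obtain a b where ab: "a \<noteq> 0 \<or> b \<noteq> 0" "\<bar>a\<bar> \<le> int s" "\<bar>b\<bar> \<le> int s" "p dvd a + x * b"
    using thue_lemma[OF \<open>0 < p\<close> s(2)] .
  have "eis_norm a b = (a + x * b) * (a - (x + 1) * b) + b\<^sup>2 * (x\<^sup>2 + x + 1)"
    unfolding eis_norm_def by (simp add: algebra_simps power2_eq_square)
  then have "p dvd eis_norm a b"
    using dvd_add[OF dvd_mult2[OF ab(4)] dvd_mult[OF dvd]] by simp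
  then obtain k where k: "eis_norm a b = p * k"
    by (elim dvdE)
  have "int (s\<^sup>2) \<le> int (nat p)"
    using s(1) by (simp only: of_nat_le_iff)
  then have "(int s)\<^sup>2 \<le> p"
    using \<open>0 < p\<close> by simp
  moreover have "(int s)\<^sup>2 \<noteq> p"
    using p prime_power_iff[of "int s" 2] by auto
  ultimately have "p * k < p * 3"
    using k eis_norm_le_three_sq[OF ab(2,3)] by simp
  moreover have "0 < p * k"
    using k eis_norm_pos[OF ab(1)] by simp
  ultimately have "k = 1 \<or> k = 2"
    using \<open>0 < p\<close> by (auto simp: zero_less_mult_iff)
  moreover have "k \<noteq> 2"
  proof
    assume "k = 2"
    then have "4 dvd eis_norm a b"
      using k by (intro four_dvd_eis_norm_if_even) simp
    then have "4 dvd 2 * p"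
      using k \<open>k = 2\<close> by (simp add: mult.commute)
    then have "2 dvd p"
      by presburger
    moreover have "odd (x\<^sup>2 + x + 1)"
      by (simp add: power2_eq_square)
    ultimately show False
      using dvd_trans[OF _ dvd] by blast
  qed
  ultimately show ?thesis
    using k by auto
qed

lemma exists_eis_norm_eq:
  fixes d :: int
  assumes "0 < d" "\<forall>p. prime p \<and> p dvd d \<longrightarrow> p mod 3 = 1"
  shows "\<exists>a b. eis_norm a b = d"
  using assms
proof (induction d rule: prime_divisors_induct)
  case zero
  then show ?case by simp
next
  case (unit d)
  then have "d = 1"
    by auto
  then have "eis_norm 1 0 = d"
    by (simp add: eis_norm_def)
  then show ?case by blast
next
  case (factor p d)
  then have "0 < d"
    using prime_gt_0_int[of p] by (simp add: zero_less_mult_iff)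
  with factor obtain a b where "eis_norm a b = d"
    by auto
  moreover have "p mod 3 = 1"
    using factor.prems(2) factor.hyps by simp
  then obtain c e where "eis_norm c e = p"
    using exists_cube_root_of_unity_mod_prime eis_norm_eq_prime factor.hyps by blast
  ultimately have "eis_norm (c * a - e * b) (c * b + e * a - e * b) = p * d"
    using eis_norm_mult[of c e a b] by simp
  then show ?case
    by blast
qed

definition hex_wr_index_set :: "real set" where
  "hex_wr_index_set = {real_of_int (3 ^ u * j ^ 2 * d * (2 * m - n) * n) | u j d m n :: int.
       u \<in> {0, 1} \<and> j > 0 \<and> d > 0 \<and> m > 0 \<and> n > 0 \<and>
       squarefree d \<and> (\<forall>p::int. prime p \<and> p dvd d \<longrightarrow> p mod 3 = 1) \<and>
       gcd m n = 1 \<and> \<not> (3 dvd (m + n)) \<and>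
       1 \<le> real_of_int m / real_of_int n \<and> real_of_int m / real_of_int n \<le> 2}"

lemma hex_wr_index_setI:
  fixes u :: nat and j d m n :: int
  assumes "u \<in> {0, 1}" "0 < j" "0 < d" "squarefree d" "\<forall>p. prime p \<and> p dvd d \<longrightarrow> p mod 3 = 1"
    and "0 < n" "n \<le> m" "m \<le> 2 * n" "coprime m n" "\<not> 3 dvd m + n"
  shows "real_of_int (3 ^ u * j ^ 2 * d * (2 * m - n) * n) \<in> hex_wr_index_set"
proof -
  have "1 \<le> real_of_int m / real_of_int n" "real_of_int m / real_of_int n \<le> 2"
    using assms(6-8) by (simp_all add: le_divide_eq divide_le_eq)
  with assms show ?thesis
    unfolding hex_wr_index_set_def mem_Collect_eq coprime_iff_gcd_eq_1
    by (intro exI[of _ u] exI[of _ j] exI[of _ d] exI[of _ m] exI[of _ n]) simp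
qed

lemma squarefree_times_square_decomp:
  fixes R :: int
  assumes "0 < R" "\<forall>p. prime p \<and> p dvd R \<longrightarrow> P p"
  obtains J d where "0 < J" "0 < d" "squarefree d" "\<forall>p. prime p \<and> p dvd d \<longrightarrow> P p" "R = J\<^sup>2 * d"
proof
  define J where "J = \<bar>square_part R\<bar>"
  define d where "d = squarefree_part R"
  show R: "R = J\<^sup>2 * d"
    using squarefree_decompose[of R] unfolding J_def d_def by (simp add: mult.commute)
  show "0 < J"
    unfolding J_def using assms(1) by simp
  then show "0 < d"
    using R assms(1) by (simp add: zero_less_mult_iff)
  show "squarefree d"
    unfolding d_def by simp
  show "\<forall>p. prime p \<and> p dvd d \<longrightarrow> P p"
    using assms(2) R by (simp add: dvd_mult)
qed

lemma scaled_coprime_in_hex_wr_index_set: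
  fixes x y h J d :: int and u :: nat
  assumes xy: "coprime x y" "0 < y" "y \<le> x" "x \<le> 3 * y" "\<not> 3 dvd x"
    and h: "0 < h" "even (h * (x - y))"
    and "u \<in> {0, 1}" "0 < J" "0 < d" "squarefree d" "\<forall>p. prime p \<and> p dvd d \<longrightarrow> p mod 3 = 1"
  shows "real_of_int (3 ^ u * (h * J)\<^sup>2 * d * x * y) \<in> hex_wr_index_set"
  \<comment> \<open>\<open>x y = (2m - n) n\<close> with \<open>(m, n) = ((x + y)/2, y)\<close>, or else \<open>(2x)(2y)\<close> with \<open>(m, n) = (x + y, 2y)\<close>\<close>
proof (cases "odd x \<and> odd y")
  case True
  define m where "m = (x + y) div 2"
  have x: "x = 2 * m - y"
    using True unfolding m_def by (auto elim!: oddE)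
  have "coprime m y"
  proof (rule coprimeI)
    fix c assume "c dvd m" "c dvd y"
    then have "c dvd x"
      unfolding x by simp
    with \<open>c dvd y\<close> show "is_unit c"
      using coprime_common_divisor[OF xy(1)] by blast
  qed
  moreover have "\<not> 3 dvd m + y"
    using xy(5) x by presburger
  ultimately have "real_of_int (3 ^ u * (h * J)\<^sup>2 * d * (2 * m - y) * y) \<in> hex_wr_index_set"
    using assms x by (intro hex_wr_index_setI) auto
  then show ?thesis
    unfolding x by simp
next
  case False
  moreover have "\<not> (even x \<and> even y)"
    using coprime_common_divisor[OF xy(1), of 2] by auto
  ultimately have "odd (x - y)"
    by auto
  then obtain h' where h': "h = 2 * h'"
    using h(2) by (auto elim!: evenE simp: even_mult_iff)
  have "coprime (x + y) y"
    using xy(1) unfolding coprime_iff_gcd_eq_1 by simp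
  then have "coprime (x + y) (2 * y)"
    using \<open>odd (x - y)\<close> by (simp add: even_add)
  moreover have "\<not> 3 dvd (x + y) + 2 * y"
    using xy(5) by presburger
  ultimately have "real_of_int (3 ^ u * (h' * J)\<^sup>2 * d * (2 * (x + y) - 2 * y) * (2 * y)) \<in> hex_wr_index_set"
    using assms h' by (intro hex_wr_index_setI) auto
  then show ?thesis
    unfolding h' by (simp add: power2_eq_square algebra_simps)
qed

lemma ordered_product_in_hex_wr_index_set:
  fixes k l R :: int
  assumes kl: "0 < l" "l \<le> k" "k \<le> 3 * l" "even (k - l)"
    and R: "0 < R" "\<forall>p. prime p \<and> p dvd R \<longrightarrow> p mod 3 = 1"
  shows "real_of_int (k * l * R) \<in> hex_wr_index_set"
proof -
  obtain J d where Jd: "0 < J" "0 < d" "squarefree d" "\<forall>p. prime p \<and> p dvd d \<longrightarrow> p mod 3 = 1" "R = J\<^sup>2 * d"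
    using squarefree_times_square_decomp[OF R] .
  define h where "h = gcd k l"
  have "0 < h"
    unfolding h_def using kl by simp
  obtain a b where ab: "k = a * h" "l = b * h" "coprime a b"
    using gcd_coprime_exists[of k l] \<open>0 < h\<close> unfolding h_def by auto
  have "0 < b" "b \<le> a" "a \<le> 3 * b"
    using kl ab \<open>0 < h\<close> by (simp_all add: zero_less_mult_iff)
  have "even (h * (a - b))"
    using kl(4) ab by (simp add: algebra_simps)
  have prod: "k * l * R = (h * J)\<^sup>2 * d * a * b"
    using ab Jd(5) by (simp add: algebra_simps power2_eq_square)
  show ?thesis
  proof (cases "3 dvd a")
    case False
    show ?thesis
      using scaled_coprime_in_hex_wr_index_set[of a b h 0 J d] ab(3) \<open>0 < b\<close> \<open>b \<le> a\<close> \<open>a \<le> 3 * b\<close>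
        False \<open>0 < h\<close> \<open>even (h * (a - b))\<close> Jd unfolding prod by simp
  next
    case True
    then obtain c where c: "a = 3 * c"
      by blast
    have "\<not> 3 dvd b"
      using True coprime_common_divisor[OF ab(3), of 3] by auto
    have "coprime b c"
      using ab(3) c by (simp add: coprime_commute)
    have "h * (b - c) = 2 * (h * c) - h * (a - b)"
      unfolding c by (simp add: algebra_simps)
    then have "even (h * (b - c))"
      using \<open>even (h * (a - b))\<close> by simp
    then show ?thesis
      using scaled_coprime_in_hex_wr_index_set[of b c h 1 J d] \<open>coprime b c\<close> \<open>0 < b\<close> \<open>b \<le> a\<close>
        \<open>a \<le> 3 * b\<close> \<open>\<not> 3 dvd b\<close> \<open>0 < h\<close> Jd c unfolding prod by (simp add: algebra_simps)
  qed
qed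

lemma product_in_hex_wr_index_set:
  fixes k l R :: int
  assumes "0 < k" "0 < l" "k \<le> 3 * l" "l \<le> 3 * k" "even (k - l)"
    and "0 < R" "\<forall>p. prime p \<and> p dvd R \<longrightarrow> p mod 3 = 1"
  shows "real_of_int (k * l * R) \<in> hex_wr_index_set"
proof (cases "l \<le> k")
  case True
  with assms show ?thesis
    by (intro ordered_product_in_hex_wr_index_set) auto
next
  case False
  have "even (l - k)"
    using assms(5) by presburger
  with False assms have "real_of_int (l * k * R) \<in> hex_wr_index_set"
    by (intro ordered_product_in_hex_wr_index_set) auto
  then show ?thesis
    by (simp add: mult.commute)
qed

lemma coprime_cross_eq_imp_multiple:
  fixes a b x y :: int
  assumes "coprime a b" "x * b = y * a"
  obtains l where "x = l * a" "y = l * b"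
proof -
  obtain u v where uv: "u * a + v * b = 1"
    using bezout_int[of a b] assms(1) by (auto simp: coprime_iff_gcd_eq_1)
  have "(u * x + v * y) * a = u * a * x + v * (y * a)"
    by (simp add: algebra_simps)
  also have "\<dots> = (u * a + v * b) * x"
    using assms(2) by (simp add: algebra_simps)
  finally have "x = (u * x + v * y) * a"
    using uv by simp
  have "(u * x + v * y) * b = u * (x * b) + v * b * y"
    by (simp add: algebra_simps)
  also have "\<dots> = (u * a + v * b) * y"
    using assms(2) by (simp add: algebra_simps)
  finally have "y = (u * x + v * y) * b"
    using uv by simp
  with \<open>x = (u * x + v * y) * a\<close> show thesis
    by (rule that)
qed

text \<open>\<open>(p1 - 2 p2) + (2 p1 - p2) \<omega> = (p1 + p2 \<omega>) (1 + 2 \<omega>)\<close>, and \<open>1 + 2 \<omega> = i \<surd>3\<close>.\<close>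

lemma eis_norm_rotate: "eis_norm (p1 - 2 * p2) (2 * p1 - p2) = 3 * eis_norm p1 p2"
  unfolding eis_norm_def by (simp add: algebra_simps power2_eq_square)

lemma eis_det_rotate: "p1 * (2 * p1 - p2) - p2 * (p1 - 2 * p2) = 2 * eis_norm p1 p2"
  unfolding eis_norm_def by (simp add: algebra_simps power2_eq_square)

lemma even_if_even_mult_coprime:
  fixes x p1 p2 :: int
  assumes "even (x * p1)" "even (x * p2)" "coprime p1 p2"
  shows "even x"
  using assms coprime_common_divisor[OF assms(3), of 2] by auto

lemma gcd_rotate:
  fixes p1 p2 :: int
  assumes p: "coprime p1 p2"
  shows "gcd (p1 - 2 * p2) (2 * p1 - p2) = (if 3 dvd p1 + p2 then 3 else 1)"
proof -
  define \<alpha> where "\<alpha> = p1 - 2 * p2"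
  define \<beta> where "\<beta> = 2 * p1 - p2"
  have "gcd \<alpha> \<beta> dvd gcd (3 * p1) (3 * p2)"
  proof (rule gcd_greatest)
    have "3 * p1 = 2 * \<beta> - \<alpha>" "3 * p2 = \<beta> - 2 * \<alpha>"
      unfolding \<alpha>_def \<beta>_def by simp_all
    then show "gcd \<alpha> \<beta> dvd 3 * p1" "gcd \<alpha> \<beta> dvd 3 * p2"
      by (simp_all add: dvd_diff dvd_mult)
  qed
  also have "gcd (3 * p1) (3 * p2) = 3"
    using p by (simp add: gcd_mult_left coprime_iff_gcd_eq_1)
  finally have "gcd \<alpha> \<beta> dvd 3" .
  have "\<alpha> \<noteq> 0 \<or> \<beta> \<noteq> 0"
    using p unfolding \<alpha>_def \<beta>_def by (auto simp: coprime_iff_gcd_eq_1)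
  then have "0 < gcd \<alpha> \<beta>"
    by simp
  moreover have "gcd \<alpha> \<beta> \<le> 3"
    using \<open>gcd \<alpha> \<beta> dvd 3\<close> by (rule zdvd_imp_le) simp
  ultimately have "gcd \<alpha> \<beta> = 1 \<or> gcd \<alpha> \<beta> = 2 \<or> gcd \<alpha> \<beta> = 3"
    by presburger
  then have "gcd \<alpha> \<beta> = 1 \<or> gcd \<alpha> \<beta> = 3"
    using \<open>gcd \<alpha> \<beta> dvd 3\<close> by auto
  moreover have "3 dvd gcd \<alpha> \<beta> \<longleftrightarrow> 3 dvd p1 + p2"
    unfolding gcd_greatest_iff \<alpha>_def \<beta>_def by presburger
  ultimately show ?thesis
    unfolding \<alpha>_def \<beta>_def by (metis dvd_refl one_dvd zdvd1_eq abs_numeral numeral_eq_one_iff semiring_norm(86))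
qed

text \<open>
  The hypothesis \<open>orth\<close> says that \<open>t1 + t2\<omega>\<close> is orthogonal to \<open>p1 + p2\<omega>\<close>, hence a rational
  multiple of \<open>(p1 + p2\<omega>) (1 + 2\<omega>)\<close>.
\<close>

lemma eis_orthogonal_multiple:
  fixes p1 p2 t1 t2 :: int
  assumes p: "coprime p1 p2" and orth: "t1 * (2 * p1 - p2) = t2 * (p1 - 2 * p2)"
  defines "g \<equiv> if 3 dvd p1 + p2 then 3 else 1"
  obtains l where "g * t1 = l * (p1 - 2 * p2)" "g * t2 = l * (2 * p1 - p2)"
proof -
  have "0 < g"
    unfolding g_def by simp
  then obtain \<alpha>' \<beta>' where ab': "p1 - 2 * p2 = \<alpha>' * g" "2 * p1 - p2 = \<beta>' * g" "coprime \<alpha>' \<beta>'"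
    using gcd_coprime_exists[of "p1 - 2 * p2" "2 * p1 - p2"] gcd_rotate[OF p] unfolding g_def by auto
  have "g * (t1 * \<beta>') = g * (t2 * \<alpha>')"
    using orth unfolding ab'(1,2) by (simp add: algebra_simps)
  then have "t1 * \<beta>' = t2 * \<alpha>'"
    using \<open>0 < g\<close> by simp
  then obtain l where "t1 = l * \<alpha>'" "t2 = l * \<beta>'"
    using coprime_cross_eq_imp_multiple[OF ab'(3)] by blast
  then have "g * t1 = l * (p1 - 2 * p2)" "g * t2 = l * (2 * p1 - p2)"
    unfolding ab'(1,2) by simp_all
  then show thesis
    by (rule that)
qed

lemma eis_norm_coprime_decomp:
  fixes a b :: int
  assumes ab: "coprime a b"
  defines "g \<equiv> if 3 dvd a + b then 3 else 1"
  obtains R where "eis_norm a b = g * R" "0 < R" "\<forall>p. prime p \<and> p dvd R \<longrightarrow> p mod 3 = 1"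
proof -
  have "g dvd eis_norm a b"
    unfolding g_def using three_dvd_eis_norm_iff by auto
  then obtain R where R: "eis_norm a b = g * R"
    by (elim dvdE)
  have "\<not> 3 dvd R"
  proof
    assume "3 dvd R"
    show False
    proof (cases "3 dvd a + b")
      case True
      obtain R' where "R = 3 * R'"
        using \<open>3 dvd R\<close> by blast
      then have "eis_norm a b = 9 * R'"
        using R True unfolding g_def by simp
      then show False
        using not_nine_dvd_eis_norm[OF ab] by simp
    next
      case False
      then show False
        using R \<open>3 dvd R\<close> three_dvd_eis_norm_iff[of a b] unfolding g_def by simp
    qed
  qed
  have "a \<noteq> 0 \<or> b \<noteq> 0"
    using ab by auto
  then have "0 < R"
    using eis_norm_pos[of a b] R unfolding g_def by (simp add: zero_less_mult_iff split: if_splits)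
  moreover have "p mod 3 = 1" if "prime p" "p dvd R" for p
  proof -
    have "p dvd eis_norm a b"
      using R that(2) by simp
    then have "p = 3 \<or> p mod 3 = 1"
      using prime_dvd_eis_norm_mod_3[OF ab that(1)] by blast
    with \<open>\<not> 3 dvd R\<close> that(2) show ?thesis
      by auto
  qed
  ultimately show thesis
    using that R by blast
qed

lemma eis_orthogonal_pair_decomp:
  fixes s1 s2 t1 t2 :: int
  assumes s: "s1 \<noteq> 0 \<or> s2 \<noteq> 0" and orth: "t1 * (2 * s1 - s2) = t2 * (s1 - 2 * s2)"
    and parity: "even (s1 - t1)" "even (s2 - t2)"
  obtains k g R l where "0 < k" "g = 1 \<or> g = 3" "0 < R" "\<forall>p. prime p \<and> p dvd R \<longrightarrow> p mod 3 = 1"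
    "eis_norm s1 s2 = g * k\<^sup>2 * R" "g * eis_norm t1 t2 = 3 * l\<^sup>2 * R"
    "s1 * t2 - s2 * t1 = 2 * k * l * R" "even (k - l)"
proof -
  define k where "k = gcd s1 s2"
  have "0 < k"
    unfolding k_def using s by simp
  then obtain p1 p2 where p: "s1 = p1 * k" "s2 = p2 * k" "coprime p1 p2"
    using gcd_coprime_exists[of s1 s2] unfolding k_def by auto
  have "k * (t1 * (2 * p1 - p2)) = k * (t2 * (p1 - 2 * p2))"
    using orth unfolding p by (simp add: algebra_simps)
  then have "t1 * (2 * p1 - p2) = t2 * (p1 - 2 * p2)"
    using \<open>0 < k\<close> by simp
  define g :: int where "g = (if 3 dvd p1 + p2 then 3 else 1)"
  obtain l where l: "g * t1 = l * (p1 - 2 * p2)" "g * t2 = l * (2 * p1 - p2)"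
    using eis_orthogonal_multiple[OF p(3) \<open>t1 * (2 * p1 - p2) = t2 * (p1 - 2 * p2)\<close>]
    unfolding g_def by blast
  obtain R where R: "eis_norm p1 p2 = g * R" "0 < R" "\<forall>p. prime p \<and> p dvd R \<longrightarrow> p mod 3 = 1"
    using eis_norm_coprime_decomp[OF p(3)] unfolding g_def by blast
  have g: "g = 1 \<or> g = 3" "g \<noteq> 0" "odd g"
    unfolding g_def by auto
  show thesis
  proof (rule that[OF \<open>0 < k\<close> g(1) R(2,3)])
    show "eis_norm s1 s2 = g * k\<^sup>2 * R"
      unfolding p using eis_norm_scale[of k p1 p2] R(1) by (simp add: mult.commute)
    have "g * (g * eis_norm t1 t2) = eis_norm (g * t1) (g * t2)"
      by (simp add: eis_norm_scale power2_eq_square)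
    also have "\<dots> = l\<^sup>2 * eis_norm (p1 - 2 * p2) (2 * p1 - p2)"
      unfolding l eis_norm_scale[symmetric] by (simp add: mult.commute)
    also have "eis_norm (p1 - 2 * p2) (2 * p1 - p2) = 3 * eis_norm p1 p2"
      by (rule eis_norm_rotate)
    finally have "g * (g * eis_norm t1 t2) = g * (3 * l\<^sup>2 * R)"
      using R(1) by (simp add: algebra_simps)
    then show "g * eis_norm t1 t2 = 3 * l\<^sup>2 * R"
      using g(2) by simp
    have "g * (s1 * t2 - s2 * t1) = k * (p1 * (g * t2) - p2 * (g * t1))"
      unfolding p by (simp add: algebra_simps)
    also have "\<dots> = k * l * (p1 * (2 * p1 - p2) - p2 * (p1 - 2 * p2))"
      unfolding l by (simp add: algebra_simps)
    also have "p1 * (2 * p1 - p2) - p2 * (p1 - 2 * p2) = 2 * eis_norm p1 p2"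
      by (rule eis_det_rotate)
    finally have "g * (s1 * t2 - s2 * t1) = g * (2 * k * l * R)"
      using R(1) by (simp add: algebra_simps)
    then show "s1 * t2 - s2 * t1 = 2 * k * l * R"
      using g(2) by simp
    from parity have "even (g * (s1 - t1))" "even (g * (s2 - t2))"
      by simp_all
    moreover have "g * (s1 - t1) = (g * k - l) * p1 + 2 * (l * p2)"
      "g * (s2 - t2) = (g * k - l) * p2 + 2 * (l * p2 - l * p1)"
      unfolding p using l by (simp_all add: algebra_simps)
    ultimately have "even ((g * k - l) * p1)" "even ((g * k - l) * p2)"
      by simp_all
    then have "even (g * k - l)"
      using p(3) by (rule even_if_even_mult_coprime)
    then show "even (k - l)"
      using g(3) by auto
  qed
qed

lemma bounds_of_norm_ratio:
  fixes g k l R Qs Qt :: int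
  assumes g: "g = 1 \<or> g = 3" and "0 < k" "0 < R"
    and Q: "Qs = g * k\<^sup>2 * R" "g * Qt = 3 * l\<^sup>2 * R" and "Qs \<le> 3 * Qt" "Qt \<le> 3 * Qs"
  shows "k \<le> 3 * \<bar>l\<bar>" "\<bar>l\<bar> \<le> 3 * k"
proof -
  have "0 < g"
    using g by auto
  have "(g * k)\<^sup>2 * R = g * Qs"
    using Q(1) by (simp add: power2_eq_square algebra_simps)
  also have "\<dots> \<le> g * (3 * Qt)"
    using \<open>Qs \<le> 3 * Qt\<close> \<open>0 < g\<close> by simp
  also have "\<dots> = (3 * l)\<^sup>2 * R"
    using Q(2) by (simp add: power2_eq_square algebra_simps)
  finally have "(g * k)\<^sup>2 \<le> (3 * l)\<^sup>2"
    using \<open>0 < R\<close> by simp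
  then have "\<bar>g * k\<bar> \<le> \<bar>3 * l\<bar>"
    by (simp only: abs_le_square_iff)
  then show "k \<le> 3 * \<bar>l\<bar>"
    using g \<open>0 < k\<close> by (auto simp: abs_mult)
  have "3 * (l\<^sup>2 * R) = g * Qt"
    using Q(2) by simp
  also have "\<dots> \<le> g * (3 * Qs)"
    using \<open>Qt \<le> 3 * Qs\<close> \<open>0 < g\<close> by simp
  also have "\<dots> = 3 * ((g * k)\<^sup>2 * R)"
    using Q(1) by (simp add: power2_eq_square algebra_simps)
  finally have "l\<^sup>2 \<le> (g * k)\<^sup>2"
    using \<open>0 < R\<close> by simp
  then have "\<bar>l\<bar> \<le> \<bar>g * k\<bar>"
    by (simp only: abs_le_square_iff)
  then show "\<bar>l\<bar> \<le> 3 * k"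
    using g \<open>0 < k\<close> by (auto simp: abs_mult)
qed

text \<open>
  A basis \<open>v = a + b\<omega>\<close>, \<open>w = c + e\<omega>\<close> with \<open>|v| = |w| \<le> |v \<plusminus> w|\<close>; by \<open>reduced_basis_min_norm\<close>
  these are exactly the minimal bases of the well-rounded sublattices.
\<close>

definition eis_reduced :: "int \<Rightarrow> int \<Rightarrow> int \<Rightarrow> int \<Rightarrow> bool" where
  "eis_reduced a b c e \<longleftrightarrow> a * e - b * c \<noteq> 0 \<and> eis_norm a b = eis_norm c e \<and>
     eis_norm a b \<le> eis_norm (a - c) (b - e) \<and> eis_norm a b \<le> eis_norm (a + c) (b + e)"

lemma eis_reduced_index_mem:
  assumes "eis_reduced a b c e"
  shows "real_of_int \<bar>a * e - b * c\<bar> \<in> hex_wr_index_set"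
proof -
  note red = assms[unfolded eis_reduced_def]
  have "a + c \<noteq> 0 \<or> b + e \<noteq> 0"
    using red by (auto simp: add_eq_0_iff)
  \<comment> \<open>\<open>v + w\<close> and \<open>v - w\<close> are orthogonal because \<open>|v| = |w|\<close>\<close>
  moreover have "(a - c) * (2 * (a + c) - (b + e)) = (b - e) * ((a + c) - 2 * (b + e))"
    using red unfolding eis_norm_def by (simp add: algebra_simps power2_eq_square)
  ultimately obtain k g R l where klgR: "0 < k" "g = 1 \<or> g = 3" "0 < R"
      "\<forall>p. prime p \<and> p dvd R \<longrightarrow> p mod 3 = 1"
      "eis_norm (a + c) (b + e) = g * k\<^sup>2 * R" "g * eis_norm (a - c) (b - e) = 3 * l\<^sup>2 * R"
      "(a + c) * (b - e) - (b + e) * (a - c) = 2 * k * l * R" "even (k - l)"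
    by (rule eis_orthogonal_pair_decomp) simp_all
  have "2 * (a * e - b * c) = 2 * (- (k * l * R))"
    using klgR(7) by (simp add: algebra_simps)
  then have det: "a * e - b * c = - (k * l * R)"
    by simp
  have "eis_norm (a + c) (b + e) + eis_norm (a - c) (b - e) = 4 * eis_norm a b"
    using red unfolding eis_norm_def by (simp add: algebra_simps power2_eq_square)
  then have "eis_norm (a + c) (b + e) \<le> 3 * eis_norm (a - c) (b - e)"
    "eis_norm (a - c) (b - e) \<le> 3 * eis_norm (a + c) (b + e)"
    using red by linarith+
  then have "k \<le> 3 * \<bar>l\<bar>" "\<bar>l\<bar> \<le> 3 * k"
    using bounds_of_norm_ratio klgR(1-3,5,6) by blast+
  moreover have "l \<noteq> 0"
    using red det by auto
  moreover have "even (k - \<bar>l\<bar>)"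
    using klgR(8) by presburger
  ultimately have "real_of_int (k * \<bar>l\<bar> * R) \<in> hex_wr_index_set"
    using \<open>0 < k\<close> klgR(3,4) by (intro product_in_hex_wr_index_set) auto
  moreover have "\<bar>a * e - b * c\<bar> = k * \<bar>l\<bar> * R"
    using det \<open>0 < k\<close> \<open>0 < R\<close> by (simp add: abs_mult)
  ultimately show ?thesis
    by simp
qed

lemma eis_reduced_of_ordered_pair:
  fixes k l a0 b0 :: int
  assumes kl: "0 < l" "l \<le> k" "k \<le> 3 * l" "even (k - l)" and "a0 \<noteq> 0 \<or> b0 \<noteq> 0"
  obtains a b c e where "eis_reduced a b c e" "\<bar>a * e - b * c\<bar> = k * l * eis_norm a0 b0"
proof -
  obtain h where h: "k = l + 2 * h"
    using kl(4) by (metis add_diff_cancel_left' diff_add_cancel dvd_def)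
  define D where "D = eis_norm a0 b0"
  have "0 < D"
    unfolding D_def using assms(5) by (rule eis_norm_pos)
  \<comment> \<open>\<open>v = (h + l + l\<omega>) \<delta>\<close>, \<open>w = (h - l\<omega>) \<delta>\<close> with \<open>\<delta> = a0 + b0\<omega>\<close>: \<open>v + w = k \<delta>\<close>, \<open>v - w = l (1 + 2\<omega>) \<delta>\<close>\<close>
  define a where "a = (l + h) * a0 - l * b0"
  define b where "b = l * a0 + h * b0"
  define c where "c = h * a0 + l * b0"
  define e where "e = (l + h) * b0 - l * a0"
  have eqs: "eis_norm a b = eis_norm c e"
    "4 * eis_norm a b = (k\<^sup>2 + 3 * l\<^sup>2) * D"
    "eis_norm (a - c) (b - e) = 3 * l\<^sup>2 * D"
    "eis_norm (a + c) (b + e) = k\<^sup>2 * D"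
    "a * e - b * c = - (k * l * D)"
    unfolding a_def b_def c_def e_def D_def eis_norm_def h by (simp_all add: algebra_simps power2_eq_square)
  have "l\<^sup>2 \<le> k\<^sup>2" "k\<^sup>2 \<le> (3 * l)\<^sup>2"
    by (rule power_mono; use kl in simp)+
  then have "(k\<^sup>2 + 3 * l\<^sup>2) * D \<le> 4 * (3 * l\<^sup>2 * D)" "(k\<^sup>2 + 3 * l\<^sup>2) * D \<le> 4 * (k\<^sup>2 * D)"
    using \<open>0 < D\<close> by (simp_all add: power_mult_distrib algebra_simps)
  moreover have "a * e - b * c \<noteq> 0"
    using eqs(5) \<open>0 < D\<close> kl by simp
  ultimately have "eis_reduced a b c e"
    unfolding eis_reduced_def using eqs(1-4) by linarith
  moreover have "\<bar>a * e - b * c\<bar> = k * l * D"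
    using eqs(5) kl \<open>0 < D\<close> by simp
  ultimately show thesis
    using that unfolding D_def by blast
qed

lemma eis_reduced_of_mem:
  assumes "z \<in> hex_wr_index_set"
  obtains a b c e where "eis_reduced a b c e" "z = real_of_int \<bar>a * e - b * c\<bar>"
proof -
  obtain u j d m n where z: "z = real_of_int (3 ^ u * j ^ 2 * d * (2 * m - n) * n)"
      "u \<in> {0, 1}" "0 < j" "0 < d" "0 < n"
      "\<forall>p. prime p \<and> p dvd d \<longrightarrow> p mod 3 = 1"
      "1 \<le> real_of_int m / real_of_int n" "real_of_int m / real_of_int n \<le> 2"
    using assms unfolding hex_wr_index_set_def by blast
  have "n \<le> m" "m \<le> 2 * n"
    using z(5,7,8) by (simp_all add: le_divide_eq divide_le_eq)
  obtain a0 b0 where "eis_norm a0 b0 = d"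
    using exists_eis_norm_eq z(4,6) by blast
  moreover have "a0 \<noteq> 0 \<or> b0 \<noteq> 0"
    using calculation z(4) by (auto simp: eis_norm_def)
  moreover obtain k l where "0 < l" "l \<le> k" "k \<le> 3 * l" "even (k - l)"
      "k * l = 3 ^ u * j\<^sup>2 * (2 * m - n) * n"
  proof (cases "u = 0")
    case True
    show thesis
      by (rule that[of "j * n" "j * (2 * m - n)"])
        (use z(3,5) \<open>n \<le> m\<close> \<open>m \<le> 2 * n\<close> True in \<open>auto simp: algebra_simps power2_eq_square\<close>)
  next
    case False
    with z(2) have "u = 1"
      by simp
    show thesis
      by (rule that[of "j * (2 * m - n)" "3 * j * n"])
        (use z(3,5) \<open>n \<le> m\<close> \<open>m \<le> 2 * n\<close> \<open>u = 1\<close> in \<open>auto simp: algebra_simps power2_eq_square\<close>)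
  qed
  ultimately obtain a b c e where "eis_reduced a b c e" "\<bar>a * e - b * c\<bar> = k * l * d"
    using eis_reduced_of_ordered_pair by metis
  moreover have "k * l * d = 3 ^ u * j ^ 2 * d * (2 * m - n) * n"
    using arg_cong[where f = "\<lambda>x. x * d", OF \<open>k * l = 3 ^ u * j\<^sup>2 * (2 * m - n) * n\<close>]
    by (simp add: algebra_simps)
  ultimately have "z = real_of_int \<bar>a * e - b * c\<bar>"
    by (simp only: z(1))
  with \<open>eis_reduced a b c e\<close> show thesis
    by (rule that)
qed

definition hex_vec :: "int \<Rightarrow> int \<Rightarrow> real \<times> real" where
  "hex_vec a b = (real_of_int a - real_of_int b / 2, real_of_int b * sqrt 3 / 2)"

lemma hex_vec_add: "hex_vec a b + hex_vec c d = hex_vec (a + c) (b + d)"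
  unfolding hex_vec_def by (simp add: algebra_simps add_divide_distrib)

lemma hex_vec_diff: "hex_vec a b - hex_vec c d = hex_vec (a - c) (b - d)"
  unfolding hex_vec_def by (simp add: algebra_simps diff_divide_distrib)

lemma hex_vec_lincomb:
  "of_int x *\<^sub>R hex_vec a b + of_int y *\<^sub>R hex_vec c d = hex_vec (x * a + y * c) (x * b + y * d)"
  unfolding hex_vec_def by (simp add: algebra_simps add_divide_distrib)

lemma hex_vec_eq_0_iff: "hex_vec a b = 0 \<longleftrightarrow> a = 0 \<and> b = 0"
  unfolding hex_vec_def zero_prod_def by auto

lemma norm_hex_vec_sq: "(norm (hex_vec a b))\<^sup>2 = real_of_int (eis_norm a b)"
proof -
  have "(norm (hex_vec a b))\<^sup>2 = (real_of_int a - real_of_int b / 2)\<^sup>2 + (real_of_int b * sqrt 3 / 2)\<^sup>2"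
    unfolding power2_norm_eq_inner hex_vec_def by (simp add: power2_eq_square)
  also have "\<dots> = real_of_int (eis_norm a b)"
    unfolding eis_norm_def by (simp add: power2_eq_square algebra_simps add_divide_distrib)
  finally show ?thesis .
qed

lemma norm_hex_vec_le_iff: "norm (hex_vec a b) \<le> norm (hex_vec c d) \<longleftrightarrow> eis_norm a b \<le> eis_norm c d"
proof -
  have "norm (hex_vec a b) \<le> norm (hex_vec c d) \<longleftrightarrow> (norm (hex_vec a b))\<^sup>2 \<le> (norm (hex_vec c d))\<^sup>2"
    by (simp add: abs_le_square_iff[symmetric])
  then show ?thesis
    unfolding norm_hex_vec_sq by simp
qed

lemma det2_hex_vec: "det2 (hex_vec a b) (hex_vec c d) = real_of_int (a * d - b * c) * sqrt 3 / 2"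
  unfolding det2_def hex_vec_def by (simp add: algebra_simps diff_divide_distrib)

lemma hex_lattice_eq: "hex_lattice = {hex_vec a b | a b. True}"
proof -
  have "of_int a *\<^sub>R (1, 0) + of_int b *\<^sub>R (- 1 / 2, sqrt 3 / 2) = hex_vec a b" for a b
    unfolding hex_vec_def by simp
  then show ?thesis
    unfolding hex_lattice_def lat_span_def by auto
qed

lemma lat_span_basis_mem: "v \<in> lat_span v w" "w \<in> lat_span v w" "v - w \<in> lat_span v w" "v + w \<in> lat_span v w"
  unfolding lat_span_def
  by (rule CollectI, rule exI[of _ 1], rule exI[of _ 0], simp)
     (rule CollectI, rule exI[of _ 0], rule exI[of _ 1], simp,
      rule CollectI, rule exI[of _ 1], rule exI[of _ "- 1"], simp,
      rule CollectI, rule exI[of _ 1], rule exI[of _ 1], simp)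

lemma det2_lat_span_coords:
  "det2 (of_int a *\<^sub>R v + of_int b *\<^sub>R w) (of_int c *\<^sub>R v + of_int d *\<^sub>R w) = real_of_int (a * d - b * c) * det2 v w"
  unfolding det2_def by (simp add: algebra_simps)

lemma lat_basis_abs_det_unique:
  assumes "is_lat_basis L v w" "is_lat_basis L v' w'"
  shows "\<bar>det2 v' w'\<bar> = \<bar>det2 v w\<bar>"
proof -
  have L: "L = lat_span v w" "L = lat_span v' w'" and nz: "det2 v w \<noteq> 0"
    using assms unfolding is_lat_basis_def by auto
  have "v' \<in> lat_span v w" "w' \<in> lat_span v w"
    using lat_span_basis_mem(1,2)[where v = v' and w = w'] L by simp_all
  then obtain a b c d where coords: "v' = of_int a *\<^sub>R v + of_int b *\<^sub>R w" "w' = of_int c *\<^sub>R v + of_int d *\<^sub>R w"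
    unfolding lat_span_def by blast
  have "v \<in> lat_span v' w'" "w \<in> lat_span v' w'"
    using lat_span_basis_mem(1,2)[where v = v and w = w] L by simp_all
  then obtain a' b' c' d' where coords': "v = of_int a' *\<^sub>R v' + of_int b' *\<^sub>R w'" "w = of_int c' *\<^sub>R v' + of_int d' *\<^sub>R w'"
    unfolding lat_span_def by blast
  have det: "det2 v' w' = real_of_int (a * d - b * c) * det2 v w"
    unfolding coords by (rule det2_lat_span_coords)
  have "det2 v w = real_of_int (a' * d' - b' * c') * det2 v' w'"
    unfolding coords' by (rule det2_lat_span_coords)
  then have "real_of_int ((a' * d' - b' * c') * (a * d - b * c)) * det2 v w = 1 * det2 v w"
    unfolding det by simp
  then have "(a' * d' - b' * c') * (a * d - b * c) = 1"
    using nz by (metis mult_right_cancel of_int_eq_1_iff)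
  then have "\<bar>a * d - b * c\<bar> = 1"
    by (metis zmult_eq_1_iff abs_neg_one abs_one)
  then have "\<bar>real_of_int (a * d - b * c)\<bar> = 1"
    by (metis of_int_abs of_int_1)
  then show ?thesis
    unfolding det by (simp add: abs_mult)
qed

lemma lat_det_eq:
  assumes "is_lat_basis L v w"
  shows "lat_det L = \<bar>det2 v w\<bar>"
  unfolding lat_det_def
  using lat_basis_abs_det_unique[OF assms] assms by (intro the_equality) blast+

lemma hex_index_hex_vec:
  assumes "is_lat_basis L (hex_vec a b) (hex_vec c d)"
  shows "hex_index L = real_of_int \<bar>a * d - b * c\<bar>"
proof -
  have "is_lat_basis hex_lattice (1, 0) (- 1 / 2, sqrt 3 / 2)"
    unfolding is_lat_basis_def hex_lattice_def det2_def by simp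
  then have hex: "lat_det hex_lattice = sqrt 3 / 2"
    by (simp add: lat_det_eq det2_def)
  show ?thesis
    unfolding hex_index_def lat_det_eq[OF assms] det2_hex_vec hex by (simp add: abs_mult)
qed

lemma reduced_basis_min_norm:
  fixes v w x :: "real \<times> real"
  assumes vw: "norm v = norm w" "norm v \<le> norm (v - w)" "norm v \<le> norm (v + w)"
    and x: "x \<in> lat_span v w" "x \<noteq> 0"
  shows "norm v \<le> norm x"
proof -
  obtain a b :: int where x_eq: "x = of_int a *\<^sub>R v + of_int b *\<^sub>R w"
    using x(1) unfolding lat_span_def by blast
  have "a \<noteq> 0 \<or> b \<noteq> 0"
    using x(2) x_eq by auto
  define N where "N = inner v v"
  define B where "B = inner v w"
  have ww: "inner w w = N"
    unfolding N_def using vw(1) by (simp add: dot_square_norm)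
  have "N \<le> inner (v - w) (v - w)" "N \<le> inner (v + w) (v + w)"
    unfolding N_def using vw(2,3) by (simp_all add: dot_square_norm abs_le_square_iff[symmetric])
  then have "\<bar>2 * B\<bar> \<le> N"
    unfolding B_def using ww by (simp add: inner_diff inner_add inner_commute N_def)
  define r where "r = real_of_int a * real_of_int b"
  have "- (r * (2 * B)) \<le> \<bar>r\<bar> * \<bar>2 * B\<bar>"
    using abs_ge_minus_self[of "r * (2 * B)"] by (simp only: abs_mult)
  also have "\<dots> \<le> \<bar>r\<bar> * N"
    using \<open>\<bar>2 * B\<bar> \<le> N\<close> by (rule mult_left_mono) simp
  finally have cross: "- (\<bar>r\<bar> * N) \<le> r * (2 * B)"
    by simp
  have "1 \<le> real_of_int (eis_norm \<bar>a\<bar> \<bar>b\<bar>)"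
    using eis_norm_pos[of "\<bar>a\<bar>" "\<bar>b\<bar>"] \<open>a \<noteq> 0 \<or> b \<noteq> 0\<close> by simp
  then have "1 \<le> (real_of_int a)\<^sup>2 + (real_of_int b)\<^sup>2 - \<bar>r\<bar>"
    unfolding eis_norm_def r_def by (simp add: abs_mult)
  moreover have "0 \<le> N"
    unfolding N_def by simp
  ultimately have "N \<le> ((real_of_int a)\<^sup>2 + (real_of_int b)\<^sup>2 - \<bar>r\<bar>) * N"
    using mult_right_mono[of 1 _ N] by simp
  also have "\<dots> \<le> inner x x"
    using cross unfolding x_eq r_def B_def N_def
    by (simp add: inner_add inner_commute ww[unfolded N_def] power2_eq_square algebra_simps)
  finally show ?thesis
    unfolding N_def by (simp add: dot_square_norm abs_le_square_iff[symmetric])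
qed

lemma WR_hex_imp_eis_reduced:
  assumes "L \<in> WR_hex"
  obtains a b c e where "eis_reduced a b c e" "hex_index L = real_of_int \<bar>a * e - b * c\<bar>"
proof -
  obtain v w where basis: "is_lat_basis L v w" and min: "\<forall>x\<in>L. x \<noteq> 0 \<longrightarrow> norm v \<le> norm x"
      "\<forall>x\<in>L. x \<noteq> 0 \<longrightarrow> norm w \<le> norm x"
    using assms unfolding WR_hex_def well_rounded_def by blast
  have L: "L = lat_span v w" "det2 v w \<noteq> 0"
    using basis unfolding is_lat_basis_def by auto
  have "L \<subseteq> hex_lattice"
    using assms unfolding WR_hex_def full_rank_sublattice_hex_def by blast
  then obtain a b c e where v: "v = hex_vec a b" and w: "w = hex_vec c e"
    using lat_span_basis_mem(1,2)[where v = v and w = w] L(1) unfolding hex_lattice_eq by blast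
  have "a * e - b * c \<noteq> 0"
    using L(2) unfolding v w det2_hex_vec by (metis divide_eq_0_iff mult_eq_0_iff of_int_0)
  then have "v \<noteq> 0" "w \<noteq> 0" "v - w \<noteq> 0" "v + w \<noteq> 0"
    unfolding v w hex_vec_diff hex_vec_add hex_vec_eq_0_iff by (auto simp: add_eq_0_iff)
  moreover have "v \<in> L" "w \<in> L" "v - w \<in> L" "v + w \<in> L"
    unfolding L(1) by (fact lat_span_basis_mem)+
  ultimately have "norm v \<le> norm w" "norm w \<le> norm v" "norm v \<le> norm (v - w)" "norm v \<le> norm (v + w)"
    using min by blast+
  then have "eis_reduced a b c e"
    using \<open>a * e - b * c \<noteq> 0\<close> unfolding eis_reduced_def v w hex_vec_diff hex_vec_add norm_hex_vec_le_iff
    by simp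
  moreover have "hex_index L = real_of_int \<bar>a * e - b * c\<bar>"
    using hex_index_hex_vec basis unfolding v w by blast
  ultimately show thesis
    by (rule that)
qed

lemma eis_reduced_imp_WR_hex:
  assumes "eis_reduced a b c e"
  shows "lat_span (hex_vec a b) (hex_vec c e) \<in> WR_hex"
    and "hex_index (lat_span (hex_vec a b) (hex_vec c e)) = real_of_int \<bar>a * e - b * c\<bar>"
proof -
  define v where "v = hex_vec a b"
  define w where "w = hex_vec c e"
  note red = assms[unfolded eis_reduced_def]
  have "real_of_int (a * e - b * c) \<noteq> 0"
    using red by (metis of_int_eq_0_iff)
  then have basis: "is_lat_basis (lat_span v w) v w"
    unfolding is_lat_basis_def v_def w_def det2_hex_vec by simp
  have sub: "lat_span v w \<subseteq> hex_lattice"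
  proof
    fix x assume "x \<in> lat_span v w"
    then obtain \<alpha> \<beta> :: int where "x = of_int \<alpha> *\<^sub>R v + of_int \<beta> *\<^sub>R w"
      unfolding lat_span_def by blast
    then have "x = hex_vec (\<alpha> * a + \<beta> * c) (\<alpha> * b + \<beta> * e)"
      unfolding v_def w_def hex_vec_lincomb .
    then show "x \<in> hex_lattice"
      unfolding hex_lattice_eq by blast
  qed
  have "norm v = norm w"
    using red norm_hex_vec_sq[of a b] norm_hex_vec_sq[of c e] unfolding v_def w_def
    by (metis norm_ge_zero power2_eq_imp_eq)
  moreover have "norm v \<le> norm (v - w)" "norm v \<le> norm (v + w)"
    using red unfolding v_def w_def hex_vec_diff hex_vec_add norm_hex_vec_le_iff by simp_all
  ultimately have "norm v \<le> norm x" "norm w \<le> norm x" if "x \<in> lat_span v w" "x \<noteq> 0" for x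
    using reduced_basis_min_norm[of v w x] that by simp_all
  then have "well_rounded (lat_span v w)"
    unfolding well_rounded_def using basis by blast
  with sub basis show "lat_span (hex_vec a b) (hex_vec c e) \<in> WR_hex"
    unfolding WR_hex_def full_rank_sublattice_hex_def v_def w_def by blast
  show "hex_index (lat_span (hex_vec a b) (hex_vec c e)) = real_of_int \<bar>a * e - b * c\<bar>"
    using hex_index_hex_vec basis unfolding v_def w_def by blast
qed

theorem corollary4p10:
  shows "hex_index ` WR_hex =
    {real_of_int (3 ^ u * j ^ 2 * d * (2 * m - n) * n) | u j d m n :: int.
       u \<in> {0, 1} \<and> j > 0 \<and> d > 0 \<and> m > 0 \<and> n > 0 \<and>
       squarefree d \<and> (\<forall>p::int. prime p \<and> p dvd d \<longrightarrow> p mod 3 = 1) \<and>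
       gcd m n = 1 \<and> \<not> (3 dvd (m + n)) \<and>
       1 \<le> real_of_int m / real_of_int n \<and> real_of_int m / real_of_int n \<le> 2}"
  unfolding hex_wr_index_set_def[symmetric]
proof
  show "hex_index ` WR_hex \<subseteq> hex_wr_index_set"
  proof
    fix z assume "z \<in> hex_index ` WR_hex"
    then obtain L where "L \<in> WR_hex" "z = hex_index L"
      by blast
    then show "z \<in> hex_wr_index_set"
      using eis_reduced_index_mem by (elim WR_hex_imp_eis_reduced) simp
  qed
  show "hex_wr_index_set \<subseteq> hex_index ` WR_hex"
  proof
    fix z assume "z \<in> hex_wr_index_set"
    then obtain a b c e where "eis_reduced a b c e" "z = real_of_int \<bar>a * e - b * c\<bar>"
      by (rule eis_reduced_of_mem)
    then show "z \<in> hex_index ` WR_hex"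
      using eis_reduced_imp_WR_hex by (metis image_eqI)
  qed
qed

end
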